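(* Let $q$ be a prime power, $n\ge 4$, and let $\mathcal{L}$ be a Cameron-Liebler line class of $\mathrm{AG}(n,q)$ with parameter $x=2$. Then for every two points $p_1,p_2$ of $\pi_\infty$, there are exactly two lines of $\mathcal{L}$ through $p_1$ and exactly two through $p_2$ (a line passing through a point of $\pi_\infty$ meaning its projective closure contains it), and these four lines span a projective subspace of $\mathrm{PG}(n,q)$ of dimension at most $3$.
   Context: $\mathrm{AG}(n,q)$ is $\mathrm{PG}(n,q)$ with a hyperplane $\pi_\infty$ removed; affine points are points outside $\pi_\infty$, affine lines are projective lines not contained in $\pi_\infty$. With $A_n$ the incidence matrix of affine points versus affine lines, a set $\mathcal{L}$ of affine lines is a Cameron-Liebler line class of $\mathrm{AG}(n,q)$ if its characteristic vector lies in the real row space $\mathrm{Im}(A_n^T)$; its parameter is $|\mathcal{L}|(q-1)/(q^n-1)$. *)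

theory Defs
  imports Complex_Main "HOL-Library.Function_Algebras"
begin

text \<open>Underlying vector space of PG(n,q): F^(n+1), modelled as functions
  nat => F with coordinates 0..n (all other coordinates zero).
  Coordinate 0 = 0 defines the hyperplane at infinity.\<close>

definition scal :: "'a::field \<Rightarrow> (nat \<Rightarrow> 'a) \<Rightarrow> (nat \<Rightarrow> 'a)" where
  "scal c v = (\<lambda>i. c * v i)"

definition vecs :: "nat \<Rightarrow> (nat \<Rightarrow> 'a::field) set" where
  "vecs n = {v. \<forall>i>n. v i = 0}"

text \<open>Projective subspaces of PG(n,F) of projective dimension k:
  vector subspaces of F^(n+1) of (vector) dimension k+1.\<close>
definition proj_subspaces :: "nat \<Rightarrow> nat \<Rightarrow> (nat \<Rightarrow> 'a::field) set set" where
  "proj_subspaces n k = {S. S \<subseteq> vecs n \<and> module.subspace scal S \<and> vector_space.dim scal S = k + 1}"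

definition proj_points :: "nat \<Rightarrow> (nat \<Rightarrow> 'a::field) set set" where
  "proj_points n = proj_subspaces n 0"

definition proj_lines :: "nat \<Rightarrow> (nat \<Rightarrow> 'a::field) set set" where
  "proj_lines n = proj_subspaces n 1"

definition hyp_inf :: "nat \<Rightarrow> (nat \<Rightarrow> 'a::field) set" where
  "hyp_inf n = {v \<in> vecs n. v 0 = 0}"

definition points_at_inf :: "nat \<Rightarrow> (nat \<Rightarrow> 'a::field) set set" where
  "points_at_inf n = {P \<in> proj_points n. P \<subseteq> hyp_inf n}"

definition affine_points :: "nat \<Rightarrow> (nat \<Rightarrow> 'a::field) set set" where
  "affine_points n = {P \<in> proj_points n. \<not> P \<subseteq> hyp_inf n}"

definition affine_lines :: "nat \<Rightarrow> (nat \<Rightarrow> 'a::field) set set" where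
  "affine_lines n = {l \<in> proj_lines n. \<not> l \<subseteq> hyp_inf n}"

text \<open>Cameron-Liebler line class of AG(n,q): the characteristic vector of L
  lies in the real row space Im(A_n^T) of the point-line incidence matrix A_n,
  i.e. it equals A_n^T f for some real vector f indexed by affine points.\<close>
definition CL_line_class :: "nat \<Rightarrow> (nat \<Rightarrow> 'a::{finite,field}) set set \<Rightarrow> bool" where
  "CL_line_class n L \<longleftrightarrow> L \<subseteq> affine_lines n \<and>
     (\<exists>f :: (nat \<Rightarrow> 'a) set \<Rightarrow> real.
        \<forall>l \<in> affine_lines n.
          (if l \<in> L then 1 else 0) = (\<Sum>P \<in> {P \<in> affine_points n. P \<subseteq> l}. f P))"

definition CL_parameter :: "nat \<Rightarrow> (nat \<Rightarrow> 'a::{finite,field}) set set \<Rightarrow> real" where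
  "CL_parameter n L = real (card L) * (real (card (UNIV :: 'a set)) - 1) / (real (card (UNIV :: 'a set)) ^ n - 1)"

end

theory Submission
  imports Defs "HOL-Library.FuncSet"
begin

text \<open>Fix a point p at infinity and a subspace S through p. The affine lines through p
  inside S partition the affine points of S, so if the characteristic vector of L is A^T f,
  the number of lines of L through p inside S equals the sum of f over the affine points of S
  and does not depend on p. For S the whole space, double counting the pairs (p, l) shows that
  every point at infinity lies on exactly x lines of L. Now let p1, p2 be distinct points at
  infinity and m a line of L through p2. The plane spanned by m and p1 then also contains a
  line l of L through p1, and l together with p2 spans that same plane. Hence every line of L
  through p2 lies in the span of p2 and the two lines of L through p1, which has vector
  dimension at most 4.\<close>

section \<open>Dimension of finite sets of vectors\<close>

context vector_space
begin

lemma dim_insert_if_finite: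
  assumes "finite S"
  shows "dim (insert x S) = (if x \<in> span S then dim S else dim S + 1)"
proof (cases "x \<in> span S")
  case True
  then show ?thesis by (metis dim_span span_redundant)
next
  case False
  obtain B where B: "B \<subseteq> span S" "independent B" "span S \<subseteq> span B" "card B = dim S"
    using basis_exists[of "span S"] by (metis dim_span)
  have "finite B" using independent_span_bound[OF assms B(2)] B(1) by blast
  have span_B: "span B = span S" using B(1,3) span_superset[of S] by (auto simp: span_eq)
  then have "span (insert x B) = span (insert x S)" by (simp only: span_insert)
  moreover have "independent (insert x B)"
    using independent_insertI[of x B] False B(2) span_B by blast
  ultimately have "dim (insert x S) = card (insert x B)" by (rule dim_eq_card)
  also have "\<dots> = dim S + 1"
    using B(1,4) False \<open>finite B\<close> card_insert_disjoint[of B x] by (metis Suc_eq_plus1 subsetD)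
  finally show ?thesis unfolding if_not_P[OF False] .
qed

lemma dim_le_if_subset_finite:
  assumes "A \<subseteq> T" "finite T"
  shows "dim A \<le> dim T"
proof -
  obtain B where B: "B \<subseteq> T" "independent B" "T \<subseteq> span B" "card B = dim T"
    using basis_exists by blast
  have "finite B" using B(1) assms(2) finite_subset by blast
  then have "dim A \<le> card B" using assms(1) B(3) by (intro dim_le_card) auto
  then show ?thesis using B(4) by simp
qed

lemma subspace_eq_if_dim_le:
  assumes "subspace S" "subspace T" "S \<subseteq> T" "finite T" "dim T \<le> dim S"
  shows "S = T"
proof (rule ccontr)
  assume "S \<noteq> T"
  then obtain x where x: "x \<in> T" "x \<notin> S" using assms(3) by blast
  have "finite S" using assms(3,4) finite_subset by blast
  moreover have "x \<notin> span S" using x assms(1) by (metis span_eq_iff)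
  ultimately have "dim (insert x S) = dim S + 1"
    using dim_insert_if_finite by simp
  moreover have "dim (insert x S) \<le> dim T"
    using x assms(3,4) by (intro dim_le_if_subset_finite) auto
  ultimately show False using assms(5) by simp
qed

lemma dim_singleton_if_nonzero: "x \<noteq> 0 \<Longrightarrow> dim {x} = 1"
  using dim_insert_if_finite[of "{}" x] dim_eq_card_independent[of "{}"] independent_empty by auto

lemma span_singleton_eq_if_mem:
  assumes "v \<in> span {a}" "v \<noteq> 0"
  shows "span {v} = span {a}"
proof -
  have "a \<in> span {v}" using in_span_insert[of v a "{}"] assms by simp
  then show ?thesis using assms(1) by (simp add: span_eq)
qed

end

context module
begin

lemma span_singleton_subset_iff: "subspace S \<Longrightarrow> span {a} \<subseteq> S \<longleftrightarrow> a \<in> S"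
  using span_base span_minimal by blast

lemma span_Un_span: "span (span A \<union> span B) = span (A \<union> B)"
proof -
  have "span A \<union> span B \<subseteq> span (A \<union> B)" by (simp add: span_mono)
  moreover have "A \<union> B \<subseteq> span (span A \<union> span B)"
    using span_superset[of "span A \<union> span B"] span_superset[of A] span_superset[of B] by blast
  ultimately show ?thesis by (simp only: span_eq)
qed

end

section \<open>Points and lines of PG(n,q)\<close>

interpretation V: vector_space "scal :: 'a::field \<Rightarrow> (nat \<Rightarrow> 'a) \<Rightarrow> (nat \<Rightarrow> 'a)"
  by unfold_locales (auto simp: scal_def fun_eq_iff algebra_simps)

lemma subspace_vecs: "V.subspace (vecs n)"
  unfolding V.subspace_def vecs_def by (auto simp: scal_def)

lemma subspace_hyp_inf: "V.subspace (hyp_inf n)"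
  unfolding V.subspace_def vecs_def hyp_inf_def by (auto simp: scal_def)

lemma bij_betw_restrict_vanishing_outside:
  "bij_betw (\<lambda>v. restrict v I) {v :: nat \<Rightarrow> 'a::zero. \<forall>i. i \<notin> I \<longrightarrow> v i = 0} (I \<rightarrow>\<^sub>E UNIV)"
  by (rule bij_betw_byWitness[where f'="\<lambda>g i. if i \<in> I then g i else 0"])
    (auto simp: fun_eq_iff PiE_def extensional_def)

lemma finite_vecs: "finite (vecs n :: (nat \<Rightarrow> 'a::{finite,field}) set)"
proof -
  have "vecs n = {v :: nat \<Rightarrow> 'a. \<forall>i. i \<notin> {..n} \<longrightarrow> v i = 0}"
    by (auto simp: vecs_def)
  then show ?thesis
    using bij_betw_finite[OF bij_betw_restrict_vanishing_outside[where I="{..n}" and 'a='a]]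
    by (simp add: finite_PiE)
qed

lemma card_hyp_inf: "card (hyp_inf n :: (nat \<Rightarrow> 'a::{finite,field}) set) = card (UNIV :: 'a set) ^ n"
proof -
  have "hyp_inf n = {v :: nat \<Rightarrow> 'a. \<forall>i. i \<notin> {1..n} \<longrightarrow> v i = 0}"
    by (auto simp: hyp_inf_def vecs_def not_less_eq_eq)
  then show ?thesis
    using bij_betw_same_card[OF bij_betw_restrict_vanishing_outside[where I="{1..n}" and 'a='a]]
    by (simp add: card_PiE)
qed

lemma finite_if_subset_vecs: "S \<subseteq> vecs n \<Longrightarrow> finite (S :: (nat \<Rightarrow> 'a::{finite,field}) set)"
  using finite_vecs finite_subset by blast

lemma finite_Pow_vecs: "finite (Pow (vecs n :: (nat \<Rightarrow> 'a::{finite,field}) set))"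
  using finite_vecs by blast

lemma finite_affine_lines: "finite (affine_lines n :: (nat \<Rightarrow> 'a::{finite,field}) set set)"
  by (rule finite_subset[OF _ finite_Pow_vecs])
    (auto simp: affine_lines_def proj_lines_def proj_subspaces_def)

lemma finite_affine_points: "finite (affine_points n :: (nat \<Rightarrow> 'a::{finite,field}) set set)"
  by (rule finite_subset[OF _ finite_Pow_vecs])
    (auto simp: affine_points_def proj_points_def proj_subspaces_def)

lemma finite_points_at_inf: "finite (points_at_inf n :: (nat \<Rightarrow> 'a::{finite,field}) set set)"
  by (rule finite_subset[OF _ finite_Pow_vecs])
    (auto simp: points_at_inf_def proj_points_def proj_subspaces_def)

lemma card_span_singleton:
  fixes a :: "nat \<Rightarrow> 'a::{finite,field}"
  assumes "a \<noteq> 0"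
  shows "card (V.span {a}) = card (UNIV :: 'a set)"
proof -
  have "inj (\<lambda>k. scal k a)" using assms by (simp add: inj_on_def)
  then show ?thesis by (simp add: V.span_singleton card_image)
qed

lemma proj_points_iff:
  "P \<in> proj_points n \<longleftrightarrow> (\<exists>a\<in>vecs n. a \<noteq> 0 \<and> P = V.span {a})"
proof
  assume "P \<in> proj_points n"
  then have P: "P \<subseteq> vecs n" "V.subspace P" "V.dim P = 1"
    by (auto simp: proj_points_def proj_subspaces_def)
  obtain B where B: "B \<subseteq> P" "V.independent B" "P \<subseteq> V.span B" "card B = V.dim P"
    using V.basis_exists by blast
  then obtain a where "B = {a}" using P(3) card_1_singleton_iff by (metis One_nat_def)
  then show "\<exists>a\<in>vecs n. a \<noteq> 0 \<and> P = V.span {a}"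
    using B P V.span_subspace[of B P] by auto
next
  assume "\<exists>a\<in>vecs n. a \<noteq> 0 \<and> P = V.span {a}"
  then obtain a where "a \<in> vecs n" "a \<noteq> 0" "P = V.span {a}" by blast
  then show "P \<in> proj_points n"
    using V.dim_singleton_if_nonzero V.span_singleton_subset_iff[OF subspace_vecs]
    by (auto simp: proj_points_def proj_subspaces_def)
qed

lemma points_at_inf_iff:
  "p \<in> points_at_inf n \<longleftrightarrow> (\<exists>c\<in>hyp_inf n. c \<noteq> 0 \<and> p = V.span {c})"
  using V.span_singleton_subset_iff[OF subspace_hyp_inf]
  by (auto simp: points_at_inf_def proj_points_iff hyp_inf_def)

lemma proj_points_eqI:
  assumes "p \<in> proj_points n" "p' \<in> proj_points n" "v \<in> p" "v \<in> p'" "v \<noteq> 0"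
  shows "p = p'"
  using assms V.span_singleton_eq_if_mem unfolding proj_points_iff by metis

lemma distinct_proj_pointsE:
  assumes "p \<in> proj_points n" "p' \<in> proj_points n" "p \<noteq> p'"
  obtains a c where "a \<in> vecs n" "c \<in> vecs n" "a \<noteq> 0" "c \<notin> V.span {a}"
    "p = V.span {a}" "p' = V.span {c}"
proof -
  obtain a c where a: "a \<in> vecs n" "a \<noteq> 0" "p = V.span {a}"
    and c: "c \<in> vecs n" "c \<noteq> 0" "p' = V.span {c}"
    using assms(1,2) unfolding proj_points_iff by blast
  have "c \<notin> V.span {a}"
    using proj_points_eqI[OF assms(1,2), of c] a c assms(3) V.span_base by blast
  with a c that show ?thesis by blast
qed

lemma dim_pair: "a \<noteq> 0 \<Longrightarrow> c \<notin> V.span {a} \<Longrightarrow> V.dim {a, c} = 2"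
  using V.dim_insert_if_finite[of "{a}" c] V.dim_singleton_if_nonzero[of a]
  by (simp add: insert_commute)

lemma proj_lines_iff: "l \<in> proj_lines n \<longleftrightarrow> l \<subseteq> vecs n \<and> V.subspace l \<and> V.dim l = 2"
  by (simp add: proj_lines_def proj_subspaces_def numeral_2_eq_2)

lemma span_pair_in_proj_lines:
  assumes "a \<in> vecs n" "c \<in> vecs n" "a \<noteq> 0" "c \<notin> V.span {a}"
  shows "V.span {a, c} \<in> proj_lines n"
  using assms dim_pair[OF assms(3,4)] V.span_minimal[OF _ subspace_vecs, of "{a, c}" n]
  by (simp add: proj_lines_iff)

lemma proj_line_eq_span_pair:
  fixes l :: "(nat \<Rightarrow> 'a::{finite,field}) set"
  assumes l: "l \<in> proj_lines n" and "a \<in> l" "c \<in> l" "a \<noteq> 0" "c \<notin> V.span {a}"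
  shows "l = V.span {a, c}"
proof -
  have "V.subspace l" "finite l" "V.dim l = 2"
    using l finite_if_subset_vecs by (auto simp: proj_lines_iff)
  moreover have "V.span {a, c} \<subseteq> l" using assms \<open>V.subspace l\<close> by (simp add: V.span_minimal)
  ultimately show ?thesis
    using V.subspace_eq_if_dim_le[of "V.span {a, c}" l] dim_pair[OF assms(4,5)] by simp
qed

lemma proj_line_span_pairE:
  fixes l :: "(nat \<Rightarrow> 'a::{finite,field}) set"
  assumes l: "l \<in> proj_lines n" and a: "a \<in> l" "a \<noteq> 0"
  obtains c where "c \<in> l" "c \<notin> V.span {a}" "l = V.span {a, c}"
proof -
  have "V.span {a} \<subseteq> l" "V.span {a} \<noteq> l"
    using l a V.dim_singleton_if_nonzero[OF a(2)] V.span_singleton_subset_iff[of l a]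
    by (auto simp: proj_lines_iff)
  then obtain c where "c \<in> l" "c \<notin> V.span {a}" by blast
  with that assms proj_line_eq_span_pair show ?thesis by blast
qed

lemma span_Un_proj_points_in_proj_lines:
  assumes "p \<in> proj_points n" "p' \<in> proj_points n" "p \<noteq> p'"
  shows "V.span (p \<union> p') \<in> proj_lines n"
proof -
  obtain a c where "a \<in> vecs n" "c \<in> vecs n" "a \<noteq> 0" "c \<notin> V.span {a}"
    "p = V.span {a}" "p' = V.span {c}"
    using assms by (rule distinct_proj_pointsE)
  then show ?thesis
    using span_pair_in_proj_lines V.span_Un_span[of "{a}" "{c}"] by (simp add: insert_commute)
qed

lemma proj_line_through_two_points:
  fixes l :: "(nat \<Rightarrow> 'a::{finite,field}) set"
  assumes "p \<in> proj_points n" "p' \<in> proj_points n" "p \<noteq> p'"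
    and "l \<in> proj_lines n" "p \<subseteq> l" "p' \<subseteq> l"
  shows "l = V.span (p \<union> p')"
proof -
  obtain a c where "a \<noteq> 0" "c \<notin> V.span {a}" "p = V.span {a}" "p' = V.span {c}"
    using assms(1-3) by (rule distinct_proj_pointsE)
  moreover have "a \<in> l" "c \<in> l" using calculation assms(5,6) V.span_base by auto
  ultimately show ?thesis
    using proj_line_eq_span_pair[OF assms(4)] V.span_Un_span[of "{a}" "{c}"]
    by (simp add: insert_commute)
qed

lemma proj_line_dim_insert:
  fixes l :: "(nat \<Rightarrow> 'a::{finite,field}) set"
  assumes "l \<in> proj_lines n"
  shows "V.dim (insert c l) = (if c \<in> l then 2 else 3)"
proof -
  have "finite l" "V.span l = l" "V.dim l = 2"
    using assms finite_if_subset_vecs by (auto simp: proj_lines_iff)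
  then show ?thesis using V.dim_insert_if_finite[of l c] by (simp del: V.span_eq_iff)
qed

section \<open>Affine lines\<close>

lemma affine_line_point_at_inf_unique:
  fixes l :: "(nat \<Rightarrow> 'a::{finite,field}) set"
  assumes l: "l \<in> affine_lines n" and p: "p \<in> points_at_inf n" "p' \<in> points_at_inf n"
    and "p \<subseteq> l" "p' \<subseteq> l"
  shows "p = p'"
proof (rule ccontr)
  assume "p \<noteq> p'"
  then have "l = V.span (p \<union> p')"
    using assms by (intro proj_line_through_two_points) (auto simp: points_at_inf_def affine_lines_def)
  also have "\<dots> \<subseteq> hyp_inf n"
    using p by (intro V.span_minimal subspace_hyp_inf) (auto simp: points_at_inf_def)
  finally show False using l by (simp add: affine_lines_def)
qed

lemma affine_line_point_at_infE:
  fixes l :: "(nat \<Rightarrow> 'a::{finite,field}) set"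
  assumes l: "l \<in> affine_lines n"
  obtains p where "p \<in> points_at_inf n" "p \<subseteq> l"
proof -
  have l': "l \<in> proj_lines n" "V.subspace l" "l \<subseteq> vecs n"
    using l by (auto simp: affine_lines_def proj_lines_iff)
  obtain a where a: "a \<in> l" "a 0 \<noteq> 0"
    using l l'(3) by (auto simp: affine_lines_def hyp_inf_def)
  then have "a \<noteq> 0" by auto
  then obtain b where b: "b \<in> l" "b \<notin> V.span {a}"
    using proj_line_span_pairE[OF l'(1) a(1)] by metis
  define c where "c = b - scal (b 0 / a 0) a"
  have "c \<in> l" unfolding c_def using a(1) b(1) l'(2) by (simp add: V.subspace_diff V.subspace_scale)
  moreover have "c 0 = 0" using a(2) by (simp add: c_def scal_def)
  moreover have "c \<noteq> 0"
  proof
    assume "c = 0"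
    then have "b = scal (b 0 / a 0) a" by (simp add: c_def)
    then show False using b(2) V.span_base V.span_scale by (metis singletonI)
  qed
  ultimately have "V.span {c} \<in> points_at_inf n" "V.span {c} \<subseteq> l"
    using l'(2,3) V.span_singleton_subset_iff[of l c] by (auto simp: points_at_inf_iff hyp_inf_def)
  then show ?thesis using that by blast
qed

lemma card_points_at_inf_on_affine_line:
  fixes l :: "(nat \<Rightarrow> 'a::{finite,field}) set"
  assumes "l \<in> affine_lines n"
  shows "card {p \<in> points_at_inf n. p \<subseteq> l} = 1"
proof -
  obtain p where "p \<in> points_at_inf n" "p \<subseteq> l"
    using assms by (rule affine_line_point_at_infE)
  then have "{p \<in> points_at_inf n. p \<subseteq> l} = {p}"
    using affine_line_point_at_inf_unique[OF assms] by blast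
  then show ?thesis by simp
qed

lemma affine_lines_through_affine_point_and_point_at_inf:
  fixes P :: "(nat \<Rightarrow> 'a::{finite,field}) set"
  assumes P: "P \<in> affine_points n" and p: "p \<in> points_at_inf n"
  shows "{l \<in> affine_lines n. P \<subseteq> l \<and> p \<subseteq> l} = {V.span (P \<union> p)}"
proof -
  have pts: "P \<in> proj_points n" "p \<in> proj_points n" "P \<noteq> p" "\<not> P \<subseteq> hyp_inf n"
    using P p by (auto simp: affine_points_def points_at_inf_def)
  then have "V.span (P \<union> p) \<in> proj_lines n" by (intro span_Un_proj_points_in_proj_lines)
  moreover have "P \<subseteq> V.span (P \<union> p)" "p \<subseteq> V.span (P \<union> p)"
    using V.span_superset[of "P \<union> p"] by auto
  moreover have "\<not> V.span (P \<union> p) \<subseteq> hyp_inf n"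
    using pts(4) \<open>P \<subseteq> V.span (P \<union> p)\<close> by (meson subset_trans)
  ultimately have "V.span (P \<union> p) \<in> affine_lines n" by (simp add: affine_lines_def)
  moreover have "l = V.span (P \<union> p)" if "l \<in> affine_lines n" "P \<subseteq> l" "p \<subseteq> l" for l
    using that proj_line_through_two_points[OF pts(1-3)] by (simp add: affine_lines_def)
  ultimately show ?thesis
    using \<open>P \<subseteq> V.span (P \<union> p)\<close> \<open>p \<subseteq> V.span (P \<union> p)\<close> by blast
qed

section \<open>Counting lines of a Cameron-Liebler line class\<close>

lemma sum_affine_points_by_lines_through_point_at_inf:
  fixes S p :: "(nat \<Rightarrow> 'a::{finite,field}) set" and f :: "(nat \<Rightarrow> 'a) set \<Rightarrow> real"
  assumes S: "V.subspace S" and p: "p \<in> points_at_inf n" "p \<subseteq> S"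
  shows "(\<Sum>l\<in>{l \<in> affine_lines n. p \<subseteq> l \<and> l \<subseteq> S}. \<Sum>P\<in>{P \<in> affine_points n. P \<subseteq> l}. f P)
       = (\<Sum>P\<in>{P \<in> affine_points n. P \<subseteq> S}. f P)"
proof -
  let ?I = "{l \<in> affine_lines n. p \<subseteq> l \<and> l \<subseteq> S}"
  have fin: "finite ?I" "finite (affine_points n :: (nat \<Rightarrow> 'a) set set)"
    using finite_affine_lines[of n, where 'a='a] finite_affine_points by simp_all
  have lines_through: "{l \<in> ?I. P \<subseteq> l} = (if P \<subseteq> S then {V.span (P \<union> p)} else {})"
    if P: "P \<in> affine_points n" for P
  proof -
    have "V.span (P \<union> p) \<subseteq> S \<longleftrightarrow> P \<subseteq> S"
      using S p(2) V.span_superset[of "P \<union> p"] V.span_minimal[of "P \<union> p" S] by blast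
    then show ?thesis
      using affine_lines_through_affine_point_and_point_at_inf[OF P p(1)] by auto
  qed
  have "(\<Sum>l\<in>?I. \<Sum>P\<in>{P \<in> affine_points n. P \<subseteq> l}. f P)
      = (\<Sum>P\<in>affine_points n. \<Sum>l\<in>{l \<in> ?I. P \<subseteq> l}. f P)"
    by (rule sum.swap_restrict[OF fin])
  also have "\<dots> = (\<Sum>P\<in>affine_points n. if P \<subseteq> S then f P else 0)"
    using lines_through by (intro sum.cong) auto
  also have "\<dots> = (\<Sum>P\<in>{P \<in> affine_points n. P \<subseteq> S}. f P)"
    using fin(2) by (simp add: sum.inter_filter)
  finally show ?thesis .
qed

lemma card_lines_through_point_at_inf_in_subspace:
  fixes L :: "(nat \<Rightarrow> 'a::{finite,field}) set set"
  assumes L: "L \<subseteq> affine_lines n"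
    and f: "\<forall>l\<in>affine_lines n. (if l \<in> L then 1 else 0) = (\<Sum>P\<in>{P \<in> affine_points n. P \<subseteq> l}. f P)"
    and S: "V.subspace S" and p: "p \<in> points_at_inf n" "p \<subseteq> S"
  shows "real (card {l \<in> L. p \<subseteq> l \<and> l \<subseteq> S}) = (\<Sum>P\<in>{P \<in> affine_points n. P \<subseteq> S}. f P)"
proof -
  let ?I = "{l \<in> affine_lines n. p \<subseteq> l \<and> l \<subseteq> S}"
  have fin: "finite ?I" using finite_affine_lines[of n, where 'a='a] by simp
  have "{l \<in> L. p \<subseteq> l \<and> l \<subseteq> S} = {l \<in> ?I. l \<in> L}" using L by auto
  then have "real (card {l \<in> L. p \<subseteq> l \<and> l \<subseteq> S}) = (\<Sum>l\<in>{l \<in> ?I. l \<in> L}. 1)" by simp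
  also have "\<dots> = (\<Sum>l\<in>?I. if l \<in> L then 1 else 0)" by (rule sum.inter_filter[OF fin])
  also have "\<dots> = (\<Sum>l\<in>?I. \<Sum>P\<in>{P \<in> affine_points n. P \<subseteq> l}. f P)"
    using f by (intro sum.cong) auto
  also have "\<dots> = (\<Sum>P\<in>{P \<in> affine_points n. P \<subseteq> S}. f P)"
    by (rule sum_affine_points_by_lines_through_point_at_inf[OF S p])
  finally show ?thesis .
qed

corollary CL_line_class_card_lines_through_eq:
  fixes L :: "(nat \<Rightarrow> 'a::{finite,field}) set set"
  assumes "CL_line_class n L" "V.subspace S"
    and "p \<in> points_at_inf n" "p' \<in> points_at_inf n" "p \<subseteq> S" "p' \<subseteq> S"
  shows "card {l \<in> L. p \<subseteq> l \<and> l \<subseteq> S} = card {l \<in> L. p' \<subseteq> l \<and> l \<subseteq> S}"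
proof -
  obtain f :: "(nat \<Rightarrow> 'a) set \<Rightarrow> real" where "L \<subseteq> affine_lines n"
    "\<forall>l\<in>affine_lines n. (if l \<in> L then 1 else 0) = (\<Sum>P\<in>{P \<in> affine_points n. P \<subseteq> l}. f P)"
    using assms(1) by (auto simp: CL_line_class_def)
  then have "real (card {l \<in> L. p \<subseteq> l \<and> l \<subseteq> S}) = real (card {l \<in> L. p' \<subseteq> l \<and> l \<subseteq> S})"
    using card_lines_through_point_at_inf_in_subspace[of L n f S] assms(2-6) by simp
  then show ?thesis by simp
qed

lemma card_points_at_inf:
  "card (points_at_inf n :: (nat \<Rightarrow> 'a::{finite,field}) set set) * (card (UNIV :: 'a set) - 1)
     = card (UNIV :: 'a set) ^ n - 1"
proof -
  let ?q = "card (UNIV :: 'a set)" and ?PI = "points_at_inf n :: (nat \<Rightarrow> 'a) set set"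
  have disjoint: "(p - {0}) \<inter> (p' - {0}) = {}" if "p \<in> ?PI" "p' \<in> ?PI" "p \<noteq> p'" for p p'
    using that proj_points_eqI[of p n p'] by (auto simp: points_at_inf_def)
  have cover: "(\<Union>p\<in>?PI. p - {0}) = hyp_inf n - {0}"
  proof
    show "(\<Union>p\<in>?PI. p - {0}) \<subseteq> hyp_inf n - {0}" by (auto simp: points_at_inf_def)
    show "hyp_inf n - {0} \<subseteq> (\<Union>p\<in>?PI. p - {0})"
    proof
      fix v :: "nat \<Rightarrow> 'a" assume "v \<in> hyp_inf n - {0}"
      then have "V.span {v} \<in> ?PI" "v \<in> V.span {v} - {0}"
        using V.span_base[of v "{v}"] by (auto simp: points_at_inf_iff)
      then show "v \<in> (\<Union>p\<in>?PI. p - {0})" by blast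
    qed
  qed
  have card_punctured: "card (p - {0}) = ?q - 1" if p: "p \<in> ?PI" for p
  proof -
    obtain c where c: "c \<noteq> 0" "p = V.span {c}" using p by (auto simp: points_at_inf_iff)
    have "finite (V.span {c})" by (simp add: V.span_singleton)
    then show ?thesis
      using c card_span_singleton[OF c(1)] V.span_zero[of "{c}"] by (simp add: card_Diff_singleton)
  qed
  have "(0 :: nat \<Rightarrow> 'a) \<in> hyp_inf n" by (rule V.subspace_0[OF subspace_hyp_inf])
  then have "?q ^ n - 1 = card (hyp_inf n - {0 :: nat \<Rightarrow> 'a})"
    by (simp add: card_Diff_singleton card_hyp_inf)
  also have "\<dots> = (\<Sum>p\<in>?PI. card (p - {0}))"
    unfolding cover[symmetric] using finite_points_at_inf disjoint
    by (intro card_UN_disjoint) (auto intro: finite_if_subset_vecs simp: points_at_inf_def hyp_inf_def)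
  also have "\<dots> = card ?PI * (?q - 1)" using card_punctured by simp
  finally show ?thesis by simp
qed

lemma card_eq_sum_card_lines_through_points_at_inf:
  fixes L :: "(nat \<Rightarrow> 'a::{finite,field}) set set"
  assumes "L \<subseteq> affine_lines n"
  shows "card L = (\<Sum>p\<in>points_at_inf n. card {l \<in> L. p \<subseteq> l})"
proof -
  have "finite L" using assms finite_affine_lines finite_subset by blast
  have "(\<Sum>l\<in>L. card {p \<in> points_at_inf n. p \<subseteq> l}) = (\<Sum>l\<in>L. 1)"
    using assms card_points_at_inf_on_affine_line by (intro sum.cong) auto
  then have "card L = (\<Sum>l\<in>L. card {p \<in> points_at_inf n. p \<subseteq> l})" by simp
  also have "\<dots> = (\<Sum>p\<in>points_at_inf n. card {l \<in> L. p \<subseteq> l})"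
    using sum.swap_restrict[OF \<open>finite L\<close> finite_points_at_inf,
        where g = "\<lambda>_ _. 1::nat" and R = "\<lambda>l p. p \<subseteq> l"]
    by simp
  finally show ?thesis .
qed

lemma card_field_ge_2: "2 \<le> card (UNIV :: 'a::{finite,field} set)"
  using card_mono[of UNIV "{0::'a, 1}"] by simp

lemma CL_parameter_eq_card_lines_through_point_at_inf:
  fixes L :: "(nat \<Rightarrow> 'a::{finite,field}) set set"
  assumes L: "CL_line_class n L" and p: "p \<in> points_at_inf n"
  shows "CL_parameter n L = real (card {l \<in> L. p \<subseteq> l})"
proof -
  let ?q = "card (UNIV :: 'a set)" and ?N = "card (points_at_inf n :: (nat \<Rightarrow> 'a) set set)"
  let ?k = "card {l \<in> L. p \<subseteq> l}"
  have L_affine: "L \<subseteq> affine_lines n" using L by (simp add: CL_line_class_def)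
  have in_vecs: "{l \<in> L. p' \<subseteq> l \<and> l \<subseteq> vecs n} = {l \<in> L. p' \<subseteq> l}" for p'
    using L_affine by (auto simp: affine_lines_def proj_lines_iff)
  have "card {l \<in> L. p' \<subseteq> l} = ?k" if p': "p' \<in> points_at_inf n" for p'
  proof -
    have "p \<subseteq> vecs n" "p' \<subseteq> vecs n" using p p' by (auto simp: points_at_inf_def hyp_inf_def)
    then show ?thesis
      using CL_line_class_card_lines_through_eq[OF L subspace_vecs[of n] p' p] by (simp only: in_vecs)
  qed
  then have "card L = ?N * ?k" using card_eq_sum_card_lines_through_points_at_inf[OF L_affine] by simp
  moreover have "?N > 0" using p finite_points_at_inf card_gt_0_iff by blast
  moreover have "real ?q ^ n - 1 = real ?N * (real ?q - 1)"
  proof -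
    have "1 \<le> ?q ^ n" using card_field_ge_2[where 'a='a] by simp
    then show ?thesis using card_points_at_inf[of n, where 'a='a] card_field_ge_2[where 'a='a]
      by (metis of_nat_1 of_nat_diff of_nat_mult of_nat_power one_le_numeral order_trans)
  qed
  moreover have "real ?q - 1 > 0" using card_field_ge_2[where 'a='a] by simp
  ultimately show ?thesis by (simp add: CL_parameter_def)
qed

section \<open>Lines of the class through two points at infinity\<close>

lemma CL_line_class_line_in_plane:
  fixes L :: "(nat \<Rightarrow> 'a::{finite,field}) set set"
  assumes L: "CL_line_class n L" and m: "m \<in> L" "p2 \<subseteq> m"
    and p: "p1 \<in> points_at_inf n" "p2 \<in> points_at_inf n" "p1 \<noteq> p2"
  shows "\<exists>l\<in>L. p1 \<subseteq> l \<and> m \<subseteq> V.span (l \<union> p2)"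
proof -
  have L_affine: "L \<subseteq> affine_lines n" using L by (simp add: CL_line_class_def)
  have m_line: "m \<in> proj_lines n" using m L_affine by (auto simp: affine_lines_def)
  obtain a where a: "a \<in> hyp_inf n" "p1 = V.span {a}" using p(1) by (auto simp: points_at_inf_iff)
  obtain c where c: "c \<in> hyp_inf n" "p2 = V.span {c}" using p(2) by (auto simp: points_at_inf_iff)
  define \<sigma> where "\<sigma> = V.span (insert a m)"
  have "insert a m \<subseteq> vecs n" using a(1) m_line by (auto simp: hyp_inf_def proj_lines_iff)
  then have "\<sigma> \<subseteq> vecs n" unfolding \<sigma>_def by (rule V.span_minimal[OF _ subspace_vecs])
  then have \<sigma>: "V.subspace \<sigma>" "finite \<sigma>" "V.dim \<sigma> \<le> 3" "p1 \<subseteq> \<sigma>" "m \<subseteq> \<sigma>"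
    using proj_line_dim_insert[OF m_line, of a] V.span_superset[of "insert a m"]
      V.span_mono[of "{a}" "insert a m"]
    unfolding \<sigma>_def a(2) by (auto intro: finite_if_subset_vecs)
  have "m \<in> {l \<in> L. p2 \<subseteq> l \<and> l \<subseteq> \<sigma>}" using m \<sigma> by simp
  then have "card {l \<in> L. p1 \<subseteq> l \<and> l \<subseteq> \<sigma>} \<noteq> 0"
    using CL_line_class_card_lines_through_eq[OF L \<sigma>(1) p(1,2) \<sigma>(4)] m(2) \<sigma>(5)
      finite_subset[OF L_affine finite_affine_lines] by auto
  then obtain l where l: "l \<in> L" "p1 \<subseteq> l" "l \<subseteq> \<sigma>"
    by (metis (no_types, lifting) card.empty empty_Collect_eq)
  have l_line: "l \<in> proj_lines n" using l L_affine by (auto simp: affine_lines_def)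
  have "c \<notin> l"
  proof
    assume "c \<in> l"
    then have "p2 \<subseteq> l" using c(2) l_line V.span_singleton_subset_iff by (auto simp: proj_lines_iff)
    then show False using affine_line_point_at_inf_unique[of l n p1 p2] l L_affine p by auto
  qed
  have "V.span (insert c l) = \<sigma>"
  proof (rule V.subspace_eq_if_dim_le)
    show "V.span (insert c l) \<subseteq> \<sigma>"
      using l(3) c(2) m(2) \<sigma>(5) V.span_base[of c "{c}"]
      by (intro V.span_minimal[OF _ \<sigma>(1)]) auto
    show "V.dim \<sigma> \<le> V.dim (V.span (insert c l))"
      using \<sigma>(3) proj_line_dim_insert[OF l_line, of c] \<open>c \<notin> l\<close> by simp
  qed (use \<sigma> in auto)
  moreover have "V.span (l \<union> p2) = V.span (insert c l)"
  proof -
    have "V.span l = l" using l_line by (simp add: proj_lines_iff)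
    then show ?thesis using V.span_Un_span[of l "{c}"] c(2) by (simp del: V.span_eq_iff)
  qed
  ultimately have "m \<subseteq> V.span (l \<union> p2)" using \<sigma>(5) by simp
  then show ?thesis using l(1,2) by blast
qed

lemma CL_line_class_lines_through_two_points_at_inf:
  fixes L :: "(nat \<Rightarrow> 'a::{finite,field}) set set"
  assumes L: "CL_line_class n L"
    and p: "p1 \<in> points_at_inf n" "p2 \<in> points_at_inf n" "p1 \<noteq> p2"
  shows "\<Union>{l \<in> L. p1 \<subseteq> l \<or> p2 \<subseteq> l} \<subseteq> V.span (\<Union>{l \<in> L. p1 \<subseteq> l} \<union> p2)"
proof (rule Union_least)
  fix m assume "m \<in> {l \<in> L. p1 \<subseteq> l \<or> p2 \<subseteq> l}"
  then have m: "m \<in> L" "p1 \<subseteq> m \<or> p2 \<subseteq> m" by simp_all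
  show "m \<subseteq> V.span (\<Union>{l \<in> L. p1 \<subseteq> l} \<union> p2)"
  proof (cases "p1 \<subseteq> m")
    case True
    then have "m \<subseteq> \<Union>{l \<in> L. p1 \<subseteq> l}" using m(1) by blast
    then show ?thesis using V.span_superset[of "\<Union>{l \<in> L. p1 \<subseteq> l} \<union> p2"] by blast
  next
    case False
    then obtain l where l: "l \<in> L" "p1 \<subseteq> l" "m \<subseteq> V.span (l \<union> p2)"
      using CL_line_class_line_in_plane[OF L m(1) _ p] m(2) by blast
    then have "V.span (l \<union> p2) \<subseteq> V.span (\<Union>{l \<in> L. p1 \<subseteq> l} \<union> p2)"
      by (intro V.span_mono) blast
    then show ?thesis using l(3) by blast
  qed
qed

lemma dim_two_concurrent_lines_and_point:
  fixes l1 l2 :: "(nat \<Rightarrow> 'a::{finite,field}) set"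
  assumes l: "l1 \<in> proj_lines n" "l2 \<in> proj_lines n"
    and p: "p \<in> proj_points n" "p \<subseteq> l1" "p \<subseteq> l2" and p': "p' \<in> proj_points n"
    and A: "A \<subseteq> V.span (l1 \<union> l2 \<union> p')"
  shows "V.dim A \<le> 4"
proof -
  obtain a where a: "a \<noteq> 0" "p = V.span {a}" using p(1) by (auto simp: proj_points_iff)
  then have "a \<in> l1" "a \<in> l2" using p(2,3) V.span_base by auto
  then obtain b1 b2 where "l1 = V.span {a, b1}" "l2 = V.span {a, b2}"
    using proj_line_span_pairE[OF l(1) _ a(1)] proj_line_span_pairE[OF l(2) _ a(1)] by metis
  moreover obtain c where "p' = V.span {c}" using p' by (auto simp: proj_points_iff)
  ultimately have "l1 \<union> l2 \<union> p' \<subseteq> V.span {a, b1, b2, c}"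
    using V.span_mono[of "{a, b1}" "{a, b1, b2, c}"] V.span_mono[of "{a, b2}" "{a, b1, b2, c}"]
      V.span_mono[of "{c}" "{a, b1, b2, c}"] by auto
  then have "A \<subseteq> V.span {a, b1, b2, c}"
    using A V.span_minimal[OF _ V.subspace_span] by blast
  then have "V.dim A \<le> card {a, b1, b2, c}" by (rule V.dim_le_card) simp
  also have "\<dots> \<le> 4" using card_length[of "[a, b1, b2, c]"] by simp
  finally show ?thesis .
qed

theorem lemma6p6:
  fixes L :: "(nat \<Rightarrow> 'a::{finite,field}) set set" and n :: nat
  assumes "n \<ge> 4"
    and "CL_line_class n L"
    and "CL_parameter n L = 2"
  shows "\<forall>p1 \<in> points_at_inf n. \<forall>p2 \<in> points_at_inf n. p1 \<noteq> p2 \<longrightarrow>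
           card {l \<in> L. p1 \<subseteq> l} = 2 \<and> card {l \<in> L. p2 \<subseteq> l} = 2 \<and>
           vector_space.dim scal (\<Union>{l \<in> L. p1 \<subseteq> l \<or> p2 \<subseteq> l}) \<le> 4"
proof -
  have two: "card {l \<in> L. p \<subseteq> l} = 2" if "p \<in> points_at_inf n" for p
    using CL_parameter_eq_card_lines_through_point_at_inf[OF assms(2) that] assms(3) by simp
  show ?thesis
  proof (intro ballI impI conjI)
    fix p1 p2 :: "(nat \<Rightarrow> 'a) set" assume p: "p1 \<in> points_at_inf n" "p2 \<in> points_at_inf n" "p1 \<noteq> p2"
    show "card {l \<in> L. p1 \<subseteq> l} = 2" "card {l \<in> L. p2 \<subseteq> l} = 2" using two p by auto
    obtain l1 l2 where l12: "{l \<in> L. p1 \<subseteq> l} = {l1, l2}"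
      using two[OF p(1)] card_2_iff by metis
    then have "l1 \<in> affine_lines n" "l2 \<in> affine_lines n" "p1 \<subseteq> l1" "p1 \<subseteq> l2"
      using assms(2) by (auto simp: CL_line_class_def)
    then show "V.dim (\<Union>{l \<in> L. p1 \<subseteq> l \<or> p2 \<subseteq> l}) \<le> 4"
      using CL_line_class_lines_through_two_points_at_inf[OF assms(2) p] l12 p
      by (intro dim_two_concurrent_lines_and_point[of l1 n l2 p1 p2])
        (auto simp: affine_lines_def points_at_inf_def)
  qed
qed

end
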